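(* Consider the UAV Persistent Service model in the homogeneous case $g_i=g$ for all $i\in\mathcal N$, with $N=|\mathcal N|\ge 1$, $f>0$, $c\ge 0$, $g>0$, $2g<f$. Run the HoRR schedule with a fleet of $$M=N+\left\lceil \frac{c+2g}{f-2g}\,N\right\rceil$$ UAVs. Then at every dispatch time a fully charged backup UAV is available at the RS, no UAV ever flies longer than $f$ time units between two recharges, and every location in $\mathcal N$ is covered at every time $t\ge 0$.
   Context: UAV Persistent Service model: there is a single recharging station (RS) and a finite set $\mathcal N$ of $N$ aerial locations, served by a fleet of identical UAVs. A UAV with a full battery can fly for at most $f>0$ time units; replacing/recharging its battery at the RS takes $c\ge 0$ time units, after which it is fully charged again. Flying between the RS and location $i$ (in either direction) takes the displacement time $g_i>0$, with $2g_i<f$. A UAV's activity consists of sorties: it leaves the RS fully charged, flies to one location, stays there (it is then said to cover that location), flies back to the RS, and the total airborne time of the sortie is at most $f$; back at the RS it spends $c$ time units recharging (and may then wait idle) before its next sortie. At time $0$ every UAV is fully charged, either at the RS or already at a location. A location is covered at time $t$ if some UAV is at that location at time $t$. HoRR schedule (homogeneous case $g_i=g$): let $x=\frac{f-2g}{N}$. At time $0$, one fully charged UAV is placed at each of the $N$ locations; the remaining UAVs (backups) are fully charged at the RS. For every $k=1,2,\dots$: a fully charged backup UAV departs the RS at time $kx-g$ (if this is negative it is considered already en route at time $0$) and arrives at time $kx$ at the location of the serving UAV with the least remaining energy (ties broken arbitrarily); it takes over that location, and the relieved UAV flies back to the RS (arriving at $kx+g$), recharges (until $kx+g+c$) and then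 becomes a backup. Backups are dispatched in the order in which they became ready. *)

theory Defs
  imports Complex_Main
begin

text \<open>
  Locations are indexed by 0..<N, UAVs by 0..<M.
  Parameters: f (max flight time), g (displacement time RS to any location),
  c (recharge time).
  The state of the schedule after the k-th dispatch (k = 0: initial state) is a triple
    (serv, dep, q)
  where serv i is the UAV serving location i, dep u is the time at which UAV u
  last left the RS fully charged (0 for UAVs that are at a location or en route
  at time 0, since every UAV is fully charged at time 0), and q is the queue of
  backup UAVs together with the time at which each became ready (fully charged
  at the RS), in the order in which they became ready.
  The tie-breaking rule is a parameter tb: at dispatch k, among the set S of
  locations whose serving UAV has least remaining energy, location tb k S is chosen.
\<close>

type_synonym horr_state = "(nat \<Rightarrow> nat) \<times> (nat \<Rightarrow> real) \<times> (nat \<times> real) list"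

definition horr_x :: "nat \<Rightarrow> real \<Rightarrow> real \<Rightarrow> real" where
  "horr_x N f g = (f - 2 * g) / real N"

definition remaining_energy :: "real \<Rightarrow> (nat \<Rightarrow> real) \<Rightarrow> nat \<Rightarrow> real \<Rightarrow> real" where
  "remaining_energy f dep u t = f - (t - dep u)"

definition least_energy_locs ::
    "nat \<Rightarrow> real \<Rightarrow> (nat \<Rightarrow> nat) \<Rightarrow> (nat \<Rightarrow> real) \<Rightarrow> real \<Rightarrow> nat set" where
  "least_energy_locs N f serv dep t =
     {i. i < N \<and> (\<forall>j<N. remaining_energy f dep (serv i) t \<le> remaining_energy f dep (serv j) t)}"

fun horr :: "nat \<Rightarrow> real \<Rightarrow> real \<Rightarrow> real \<Rightarrow> nat \<Rightarrow> (nat \<Rightarrow> nat set \<Rightarrow> nat) \<Rightarrow> nat \<Rightarrow> horr_state" where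
  "horr N f g c M tb 0 = ((\<lambda>i. i), (\<lambda>u. 0), map (\<lambda>u. (u, 0)) [N..<M])"
| "horr N f g c M tb (Suc k) =
     (let (serv, dep, q) = horr N f g c M tb k;
          t = real (Suc k) * horr_x N f g;
          l = tb (Suc k) (least_energy_locs N f serv dep t);
          b = fst (hd q)
      in (serv(l := b), dep(b := max 0 (t - g)), tl q @ [(serv l, t + g + c)]))"

definition horr_serv where "horr_serv N f g c M tb k = fst (horr N f g c M tb k)"
definition horr_dep where "horr_dep N f g c M tb k = fst (snd (horr N f g c M tb k))"
definition horr_queue where "horr_queue N f g c M tb k = snd (snd (horr N f g c M tb k))"

text \<open>Location chosen at dispatch k (k \<ge> 1), taking place at time k*x.\<close>
definition horr_loc :: "nat \<Rightarrow> real \<Rightarrow> real \<Rightarrow> real \<Rightarrow> nat \<Rightarrow> (nat \<Rightarrow> nat set \<Rightarrow> nat) \<Rightarrow> nat \<Rightarrow> nat" where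
  "horr_loc N f g c M tb k =
     tb k (least_energy_locs N f (horr_serv N f g c M tb (k - 1)) (horr_dep N f g c M tb (k - 1))
             (real k * horr_x N f g))"

definition horr_relieved where
  "horr_relieved N f g c M tb k = horr_serv N f g c M tb (k - 1) (horr_loc N f g c M tb k)"

text \<open>At dispatch k (departure time k*x - g, or time 0 if that is negative), a fully
  charged backup is available at the RS: the backup queue is nonempty and its head
  became ready no later than the departure time.\<close>
definition backup_available where
  "backup_available N f g c M tb k \<longleftrightarrow>
     horr_queue N f g c M tb (k - 1) \<noteq> [] \<and>
     snd (hd (horr_queue N f g c M tb (k - 1))) \<le> max 0 (real k * horr_x N f g - g)"

text \<open>Total airborne time of the sortie ended by the relief at dispatch k:
  from the relieved UAV's last departure until its return to the RS at k*x + g.\<close>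
definition relief_flight_time where
  "relief_flight_time N f g c M tb k =
     real k * horr_x N f g + g - horr_dep N f g c M tb (k - 1) (horr_relieved N f g c M tb k)"

definition horr_at where
  "horr_at N f g c M tb u i t \<longleftrightarrow>
     (\<exists>k::nat. real k * horr_x N f g \<le> t \<and> t < real (Suc k) * horr_x N f g \<and>
               horr_serv N f g c M tb k i = u)"

definition horr_covered where
  "horr_covered N f g c M tb i t \<longleftrightarrow> (\<exists>u<M. horr_at N f g c M tb u i t)"

end

theory Submission
  imports Defs "HOL-Library.Multiset"
begin

text \<open>
  Dispatches happen every \<open>x = (f - 2g)/N\<close> time units. By induction on the dispatches,
  right after dispatch \<open>k\<close> the \<open>N\<close> serving UAVs left the recharging station at the times
  \<open>max 0 ((k - j) x - g)\<close>, \<open>j < N\<close>: the least-energy UAV is always the one that departed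
  \<open>N\<close> dispatches ago, so HoRR is a round robin. The relieved UAV therefore has flown
  \<open>(k+1)x + g - ((k+1-N)x - g) = Nx + 2g = f\<close>. It joins the end of a queue of
  \<open>B = M - N\<close> backups, ready at \<open>(k+1)x + g + c\<close>, and is dispatched again \<open>B\<close> dispatches
  later, i.e. at \<open>(k+1+B)x - g\<close>, which is late enough because \<open>Bx \<ge> c + 2g\<close> by the choice
  of \<open>M\<close>. Finally, a location not chosen in \<open>N\<close> consecutive dispatches would keep a UAV
  older than every serving UAV, so every location is relieved infinitely often.
\<close>

lemma least_energy_locs_iff:
  "i \<in> least_energy_locs N f s d t \<longleftrightarrow> i < N \<and> (\<forall>j<N. d (s i) \<le> d (s j))"
  by (auto simp: least_energy_locs_def remaining_energy_def)

lemma least_energy_locs_nonempty: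
  assumes "N \<ge> 1"
  shows "least_energy_locs N f s d t \<noteq> {}"
proof -
  have "(\<lambda>i. d (s i)) ` {..<N} \<noteq> {}" using assms by (simp add: lessThan_empty_iff)
  then have "Min ((\<lambda>i. d (s i)) ` {..<N}) \<in> (\<lambda>i. d (s i)) ` {..<N}" by (intro Min_in) auto
  then obtain i where "i < N" "d (s i) = Min ((\<lambda>i. d (s i)) ` {..<N})" by auto
  then have "i \<in> least_energy_locs N f s d t" by (simp add: least_energy_locs_iff)
  then show ?thesis by blast
qed

lemma mset_min_eq_last:
  fixes h :: "nat \<Rightarrow> 'a::linorder"
  assumes xs: "mset xs = mset (map h [0..<n])"
    and anti: "\<And>j j'. j \<le> j' \<Longrightarrow> h j' \<le> h j"
    and l: "l < length xs" and min: "\<And>j. j < length xs \<Longrightarrow> xs ! l \<le> xs ! j"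
  shows "xs ! l = h (n - 1)"
proof -
  have set_eq: "set xs = h ` {..<n}"
    using arg_cong[OF xs, of set_mset] by auto
  have "xs ! l \<in> h ` {..<n}" using set_eq l by (metis nth_mem)
  then obtain i where "i < n" "xs ! l = h i" by blast
  then have lower: "h (n - 1) \<le> xs ! l" using anti[of i "n - 1"] by simp
  have "h (n - 1) \<in> set xs" using set_eq \<open>i < n\<close> by simp
  then obtain j where "j < length xs" "xs ! j = h (n - 1)" by (metis in_set_conv_nth)
  then show ?thesis using min[of j] lower by simp
qed

lemma mset_swap_head:
  assumes "q \<noteq> []" and "l < N"
  shows "mset (map fst (tl q @ [(s l, r)]) @ map (s(l := fst (hd q))) [0..<N])
       = mset (map fst q @ map s [0..<N])"
proof -
  have upd: "map (s(l := fst (hd q))) [0..<N] = (map s [0..<N])[l := fst (hd q)]"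
    using assms(2) by (auto intro!: nth_equalityI simp: nth_list_update)
  have mem: "s l \<in># mset (map s [0..<N])" using assms(2) by simp
  have hd_tl: "map fst q = fst (hd q) # map fst (tl q)" using assms(1) by (cases q) auto
  show ?thesis
    using assms(2) by (simp add: upd mset_update hd_tl insert_DiffM[OF mem])
qed

locale horr_fleet =
  fixes N :: nat and f g c :: real and tb :: "nat \<Rightarrow> nat set \<Rightarrow> nat" and M :: nat
  assumes N_ge_1: "N \<ge> 1" and c_nonneg: "c \<ge> 0" and g_pos: "g > 0" and g_lt: "2 * g < f"
    and tb: "\<And>k S. S \<noteq> {} \<Longrightarrow> S \<subseteq> {..<N} \<Longrightarrow> tb k S \<in> S"
    and M: "M = N + nat \<lceil>(c + 2 * g) / (f - 2 * g) * real N\<rceil>"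
begin

abbreviation "x \<equiv> horr_x N f g"
abbreviation "B \<equiv> M - N"
abbreviation "serv \<equiv> horr_serv N f g c M tb"
abbreviation "dep \<equiv> horr_dep N f g c M tb"
abbreviation "queue \<equiv> horr_queue N f g c M tb"
abbreviation "loc \<equiv> horr_loc N f g c M tb"

lemma x_pos: "x > 0"
  using N_ge_1 g_lt by (simp add: horr_x_def)

lemma N_times_x: "real N * x = f - 2 * g"
  using N_ge_1 by (simp add: horr_x_def)

lemma backups_times_x: "c + 2 * g \<le> real B * x"
proof -
  have "0 \<le> (c + 2 * g) / (f - 2 * g) * real N" using c_nonneg g_pos g_lt by auto
  then have "(c + 2 * g) / (f - 2 * g) * real N \<le> real B" using M by simp
  then have "(c + 2 * g) / (f - 2 * g) * real N * x \<le> real B * x"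
    using x_pos by (intro mult_right_mono) auto
  then show ?thesis using N_times_x g_lt by (simp add: mult.assoc)
qed

lemma backups_pos: "B \<ge> 1"
proof (rule ccontr)
  assume "\<not> B \<ge> 1"
  then have "B = 0" by simp
  then show False using backups_times_x c_nonneg g_pos by simp
qed

lemma horr_0: "serv 0 = id" "dep 0 = (\<lambda>u. 0)" "queue 0 = map (\<lambda>u. (u, 0)) [N..<M]"
  by (simp_all add: horr_serv_def horr_dep_def horr_queue_def id_def)

lemma horr_Suc:
  "serv (Suc k) = (serv k)(loc (Suc k) := fst (hd (queue k)))"
  "dep (Suc k) = (dep k)(fst (hd (queue k)) := max 0 (real (Suc k) * x - g))"
  "queue (Suc k) = tl (queue k) @ [(serv k (loc (Suc k)), real (Suc k) * x + g + c)]"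
  by (simp_all add: horr_serv_def horr_dep_def horr_queue_def horr_loc_def Let_def
      split: prod.split)

lemma loc_Suc_least: "loc (Suc k) \<in> least_energy_locs N f (serv k) (dep k) (real (Suc k) * x)"
proof -
  let ?L = "least_energy_locs N f (serv k) (dep k) (real (Suc k) * x)"
  have "tb (Suc k) ?L \<in> ?L"
    by (rule tb[OF least_energy_locs_nonempty[OF N_ge_1]]) (auto simp: least_energy_locs_iff)
  then show ?thesis by (simp add: horr_loc_def)
qed

lemma loc_Suc_less: "loc (Suc k) < N"
  using loc_Suc_least by (simp add: least_energy_locs_iff)

lemma queue_length: "length (queue k) = B"
proof (induction k)
  case 0
  then show ?case by (simp add: horr_0)
next
  case (Suc k)
  then show ?case using backups_pos by (simp add: horr_Suc)
qed

lemma queue_nonempty: "queue k \<noteq> []"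
  using queue_length[of k] backups_pos by auto

lemma uav_partition: "mset (map fst (queue k) @ map (serv k) [0..<N]) = mset [0..<M]"
proof (induction k)
  case 0
  have "[0..<M] = [0..<N] @ [N..<M]" using M upt_add_eq_append[of 0 N "M - N"] by simp
  then show ?case by (simp add: horr_0 comp_def)
next
  case (Suc k)
  have "mset (map fst (queue (Suc k)) @ map (serv (Suc k)) [0..<N])
      = mset (map fst (queue k) @ map (serv k) [0..<N])"
    unfolding horr_Suc by (rule mset_swap_head[OF queue_nonempty loc_Suc_less])
  then show ?case using Suc.IH by simp
qed

lemma queue_head_not_serving: "j < N \<Longrightarrow> serv k j \<noteq> fst (hd (queue k))"
proof -
  assume "j < N"
  have "distinct (map fst (queue k) @ map (serv k) [0..<N])"
    using mset_eq_imp_distinct_iff[OF uav_partition] by simp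
  moreover have "fst (hd (queue k)) \<in> set (map fst (queue k))"
    using queue_nonempty[of k] by (cases "queue k") auto
  moreover have "serv k j \<in> set (map (serv k) [0..<N])" using \<open>j < N\<close> by simp
  ultimately show ?thesis by (auto simp del: set_map)
qed

lemma serv_less: "j < N \<Longrightarrow> serv k j < M"
  using arg_cong[OF uav_partition[of k], of set_mset] by auto

text \<open>The \<open>p\<close>-th backup in the queue was relieved at dispatch \<open>k + 1 + p - B\<close> (or was a
  backup from the start).\<close>

lemma queue_ready:
  "p < B \<Longrightarrow> snd (queue k ! p) \<le> max 0 ((real k + 1 + real p - real B) * x + g + c)"
proof (induction k arbitrary: p)
  case 0
  then show ?case by (simp add: horr_0)
next
  case (Suc k)
  show ?case
  proof (cases "p < B - 1")
    case True
    then have "queue (Suc k) ! p = queue k ! Suc p"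
      using queue_length[of k] queue_nonempty[of k] by (simp add: horr_Suc nth_append nth_tl)
    then show ?thesis using Suc.IH[of "Suc p"] True by (simp add: algebra_simps)
  next
    case False
    then have "p = B - 1" using Suc.prems by simp
    then have "queue (Suc k) ! p = (serv k (loc (Suc k)), real (Suc k) * x + g + c)"
      using queue_length[of k] queue_nonempty[of k] by (simp add: horr_Suc nth_append)
    moreover have "real (Suc k) + 1 + real p - real B = real (Suc k)"
      using \<open>p = B - 1\<close> backups_pos by linarith
    ultimately show ?thesis by (metis le_max_iff_disj order_refl snd_conv)
  qed
qed

text \<open>\<open>slot_dep k j\<close> is the departure time of the backup dispatched at dispatch \<open>k - j\<close>
  (time \<open>0\<close> for UAVs present from the start).\<close>

definition slot_dep :: "nat \<Rightarrow> nat \<Rightarrow> real" where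
  "slot_dep k j = max 0 ((real k - real j) * x - g)"

lemma slot_dep_antimono: "j \<le> j' \<Longrightarrow> slot_dep k j' \<le> slot_dep k j"
  using x_pos unfolding slot_dep_def by (intro max.mono mult_right_mono) auto

lemma mset_slot_dep_Suc:
  "add_mset (slot_dep (Suc k) 0) (mset (map (slot_dep k) [0..<N]) - {#slot_dep k (N - 1)#})
     = mset (map (slot_dep (Suc k)) [0..<N])"
proof -
  obtain n where n: "N = Suc n" using N_ge_1 by (cases N) auto
  have shift: "slot_dep (Suc k) (Suc j) = slot_dep k j" for j
    by (simp add: slot_dep_def)
  have snoc: "[0..<N] = [0..<n] @ [N - 1]" and cons: "[0..<N] = [0..<Suc n]"
    using n by simp_all
  have "map (slot_dep k) [0..<N] = map (slot_dep k) [0..<n] @ [slot_dep k (N - 1)]"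
    by (simp only: snoc map_append list.map)
  moreover have "map (slot_dep (Suc k)) [0..<N] = slot_dep (Suc k) 0 # map (slot_dep k) [0..<n]"
    by (simp only: cons map_upt_Suc shift)
  ultimately show ?thesis by simp
qed

lemma relieved_dep_if_serving_deps:
  assumes "mset (map (\<lambda>i. dep k (serv k i)) [0..<N]) = mset (map (slot_dep k) [0..<N])"
  shows "dep k (serv k (loc (Suc k))) = slot_dep k (N - 1)"
proof -
  have "map (\<lambda>i. dep k (serv k i)) [0..<N] ! loc (Suc k) = slot_dep k (N - 1)"
    using loc_Suc_least[of k] assms slot_dep_antimono
    by (intro mset_min_eq_last) (auto simp: least_energy_locs_iff)
  then show ?thesis using loc_Suc_less[of k] by simp
qed

lemma serving_deps: "mset (map (\<lambda>i. dep k (serv k i)) [0..<N]) = mset (map (slot_dep k) [0..<N])"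
proof (induction k)
  case 0
  have "slot_dep 0 j = 0" for j
  proof -
    have "0 \<le> real j * x" using x_pos by simp
    then show ?thesis using g_pos by (simp add: slot_dep_def)
  qed
  then show ?case by (simp add: horr_0)
next
  case (Suc k)
  let ?l = "loc (Suc k)" and ?ds = "map (\<lambda>i. dep k (serv k i)) [0..<N]"
  have "?ds ! ?l = slot_dep k (N - 1)"
    using relieved_dep_if_serving_deps[OF Suc.IH] loc_Suc_less[of k] by simp
  moreover have "map (\<lambda>i. dep (Suc k) (serv (Suc k) i)) [0..<N] = ?ds[?l := slot_dep (Suc k) 0]"
    using loc_Suc_less[of k] queue_head_not_serving[of _ k]
    by (auto intro!: nth_equalityI simp: horr_Suc nth_list_update slot_dep_def)
  ultimately show ?case
    using loc_Suc_less[of k] Suc.IH mset_slot_dep_Suc by (simp add: mset_update)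
qed

lemma relieved_dep: "dep k (serv k (loc (Suc k))) = slot_dep k (N - 1)"
  using relieved_dep_if_serving_deps[OF serving_deps] .

lemma serving_dep_bounds:
  assumes "j < N"
  shows "slot_dep k (N - 1) \<le> dep k (serv k j)" and "dep k (serv k j) \<le> slot_dep k 0"
proof -
  have "dep k (serv k j) \<in> set (map (slot_dep k) [0..<N])"
    using arg_cong[OF serving_deps[of k], of set_mset] assms by auto
  then obtain i where "i < N" "dep k (serv k j) = slot_dep k i" by auto
  then show "slot_dep k (N - 1) \<le> dep k (serv k j)" and "dep k (serv k j) \<le> slot_dep k 0"
    using slot_dep_antimono[of i "N - 1" k] slot_dep_antimono[of 0 i k] by simp_all
qed

lemma backup_available_Suc: "backup_available N f g c M tb (Suc k)"
proof -
  have "snd (hd (queue k)) = snd (queue k ! 0)"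
    using queue_nonempty[of k] by (cases "queue k") auto
  also have "\<dots> \<le> max 0 ((real k + 1 - real B) * x + g + c)"
    using queue_ready[of 0 k] backups_pos by simp
  also have "\<dots> \<le> max 0 (real (Suc k) * x - g)"
    using backups_times_x by (auto simp: algebra_simps intro: max.mono)
  finally show ?thesis using queue_nonempty[of k] by (simp add: backup_available_def)
qed

lemma relief_flight_time_Suc: "relief_flight_time N f g c M tb (Suc k) \<le> f"
proof -
  have "(real k - real (N - 1)) * x - g \<le> dep k (serv k (loc (Suc k)))"
    by (simp add: relieved_dep slot_dep_def)
  then have "relief_flight_time N f g c M tb (Suc k) \<le> real N * x + 2 * g"
    using N_ge_1 by (simp add: relief_flight_time_def horr_relieved_def algebra_simps of_nat_diff)
  then show ?thesis using N_times_x by simp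
qed

lemma location_covered: "t \<ge> 0 \<Longrightarrow> i < N \<Longrightarrow> horr_covered N f g c M tb i t"
proof -
  assume "t \<ge> 0" "i < N"
  define k where "k = nat \<lfloor>t / x\<rfloor>"
  have "real k = of_int \<lfloor>t / x\<rfloor>" using \<open>t \<ge> 0\<close> x_pos by (simp add: k_def)
  then have "real k \<le> t / x" "t / x < real k + 1" by linarith+
  then have "real k * x \<le> t" "t < real (Suc k) * x"
    using x_pos by (simp_all add: pos_le_divide_eq pos_divide_less_eq algebra_simps)
  then show ?thesis
    using serv_less[OF \<open>i < N\<close>] unfolding horr_covered_def horr_at_def by blast
qed

lemma serv_unchanged:
  assumes "\<And>m. 1 \<le> m \<Longrightarrow> m \<le> n \<Longrightarrow> loc (K + m) \<noteq> i" and "i < N"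
  shows "serv (K + n) i = serv K i \<and> dep (K + n) (serv K i) = dep K (serv K i)"
  using assms(1)
proof (induction n)
  case 0
  then show ?case by simp
next
  case (Suc n)
  have "loc (Suc (K + n)) \<noteq> i" using Suc.prems[of "Suc n"] by simp
  moreover have "serv (K + n) i = serv K i \<and> dep (K + n) (serv K i) = dep K (serv K i)"
    using Suc by simp
  ultimately show ?case
    using queue_head_not_serving[OF assms(2), of "K + n"] by (simp add: horr_Suc)
qed

lemma location_relieved_again: "i < N \<Longrightarrow> \<exists>k'>k. loc k' = i"
proof (rule ccontr)
  assume "i < N" and never: "\<not> (\<exists>k'>k. loc k' = i)"
  obtain n where n: "g < real n * x" using reals_Archimedean3[OF x_pos] by blast
  define K where "K = k + n"
  have "serv (K + N) i = serv K i" "dep (K + N) (serv K i) = dep K (serv K i)"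
    using serv_unchanged[of N K i] never \<open>i < N\<close> unfolding K_def by auto
  then have "slot_dep (K + N) (N - 1) \<le> slot_dep K 0"
    using serving_dep_bounds[OF \<open>i < N\<close>, of K] serving_dep_bounds[OF \<open>i < N\<close>, of "K + N"]
    by simp
  moreover have "real n * x \<le> real K * x" using x_pos by (simp add: K_def)
  ultimately show False
    using n N_ge_1 x_pos by (simp add: slot_dep_def of_nat_diff algebra_simps)
qed

end

theorem theorem1:
  fixes N :: nat and f g c :: real and tb :: "nat \<Rightarrow> nat set \<Rightarrow> nat" and M :: nat
  assumes "N \<ge> 1" and "f > 0" and "c \<ge> 0" and "g > 0" and "2 * g < f"
    and tb: "\<And>k S. S \<noteq> {} \<Longrightarrow> S \<subseteq> {..<N} \<Longrightarrow> tb k S \<in> S"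
    and M: "M = N + nat \<lceil>(c + 2 * g) / (f - 2 * g) * real N\<rceil>"
  shows "(\<forall>k\<ge>1. backup_available N f g c M tb k)
       \<and> (\<forall>k\<ge>1. relief_flight_time N f g c M tb k \<le> f)
       \<and> (\<forall>k. \<forall>i<N. \<exists>k'>k. horr_loc N f g c M tb k' = i)
       \<and> (\<forall>t\<ge>0. \<forall>i<N. horr_covered N f g c M tb i t)"
proof -
  interpret horr_fleet N f g c tb M
    using assms by unfold_locales auto
  have "k \<ge> 1 \<Longrightarrow> \<exists>k0. k = Suc k0" for k :: nat by (cases k) auto
  then show ?thesis
    using backup_available_Suc relief_flight_time_Suc location_relieved_again location_covered
    by blast
qed

end
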